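(* Let $c$ be a step speed function and $q\in\mathbb R$. Fix $z,w>0$. There exists a constant $C=C(z,w,c(\cdot-q))<\infty$ such that for all $0<\delta\le1$ and all $0\le a\le z$, $$\Gamma^q((a,0),(z,\delta))-\Gamma^q((a,0),(z,0))\le C\sqrt\delta,$$ and for all $0\le b\le w$, $$\Gamma^q((-b,b),(-w,w+\delta))-\Gamma^q((-b,b),(-w,w))\le C\sqrt\delta.$$
   Context: A step speed function is $c(x)=\sum_{m=1}^{L-1}r_m\mathbf 1_{(a_m,a_{m+1})}(x)+\sum_{m=2}^{L-1}\min\{r_{m-1},r_m\}\mathbf 1_{\{a_m\}}(x)$ with $-\infty=a_1<\dots<a_L=+\infty$ and $r_m>0$. $\mathcal W=\{(x,y):y\ge0,x\ge-y\}$; $\gamma(x,y)=(\sqrt{x+y}+\sqrt y)^2$. For points $P$ and $Q\in P+\mathcal W$, $\Gamma^q(P,Q)=\sup\int_0^1\frac{\gamma(\mathbf x'(s))}{c(x_1(s)-q)}ds$, the supremum over continuous piecewise $C^1$ paths $\mathbf x=(x_1,x_2):[0,1]\to\mathbb R^2$ with $\mathbf x(0)=P$, $\mathbf x(1)=Q$ and $\mathbf x'(s)\in\mathcal W$ wherever defined. *)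

theory Defs
  imports "HOL-Analysis.Analysis" "HOL-Library.Extended_Real"
begin

definition step_speed :: "(real \<Rightarrow> real) \<Rightarrow> bool" where
  "step_speed c \<longleftrightarrow> (\<exists>(L::nat) (a::nat \<Rightarrow> ereal) (r::nat \<Rightarrow> real).
     L \<ge> 2 \<and> a 1 = -\<infinity> \<and> a L = \<infinity> \<and>
     (\<forall>m. 1 \<le> m \<and> m < L \<longrightarrow> a m < a (m+1)) \<and>
     (\<forall>m. 1 \<le> m \<and> m \<le> L - 1 \<longrightarrow> r m > 0) \<and>
     (\<forall>x. c x = (\<Sum>m=1..L-1. r m * indicator {y. a m < ereal y \<and> ereal y < a (m+1)} x)
                + (\<Sum>m=2..L-1. min (r (m-1)) (r m) * indicator {y. ereal y = a m} x)))"

definition Wcone :: "(real \<times> real) set" where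
  "Wcone = {(x, y). y \<ge> 0 \<and> x \<ge> - y}"

definition gam :: "real \<times> real \<Rightarrow> real" where
  "gam v = (sqrt (fst v + snd v) + sqrt (snd v))^2"

definition pw_C1 :: "(real \<Rightarrow> real \<times> real) \<Rightarrow> bool" where
  "pw_C1 x \<longleftrightarrow> continuous_on {0..1} x \<and>
     (\<exists>T. finite T \<and> T \<subseteq> {0..1} \<and> 0 \<in> T \<and> 1 \<in> T \<and>
        (\<forall>s\<in>T. \<forall>t\<in>T. s < t \<and> {s<..<t} \<inter> T = {} \<longrightarrow>
           (\<exists>D. continuous_on {s..t} D \<and>
                (\<forall>u\<in>{s..t}. (x has_vector_derivative D u) (at u within {s..t})))))"

definition admissible_path :: "real \<times> real \<Rightarrow> real \<times> real \<Rightarrow> (real \<Rightarrow> real \<times> real) \<Rightarrow> bool" where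
  "admissible_path P Q x \<longleftrightarrow> pw_C1 x \<and> x 0 = P \<and> x 1 = Q \<and>
     (\<forall>s\<in>{0..1}. x differentiable (at s) \<longrightarrow> vector_derivative x (at s) \<in> Wcone)"

definition Gamma :: "(real \<Rightarrow> real) \<Rightarrow> real \<Rightarrow> real \<times> real \<Rightarrow> real \<times> real \<Rightarrow> real" where
  "Gamma c q P Q = Sup {integral {0..1} (\<lambda>s. gam (vector_derivative x (at s)) / c (fst (x s) - q)) | x.
       admissible_path P Q x}"

end

theory Submission imports Defs begin

(* Write g(t) = 1/c(t - q); since c is a step function bounded below by a
   positive constant, g is bounded and piecewise constant with finitely many jumps.
   Lower bound: the straight segment from (a,0) to (z,0) (resp. from (-b,b) to (-w,w))
   is admissible and its value is the integral of g over [a,z] (resp. of g(-.) over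
   [b,w]); hence Gamma at the unperturbed endpoint is at least that integral.
   Upper bound: along any admissible path to the perturbed endpoint one coordinate p
   (x1+x2, resp. x2) runs monotonically over an interval of length about z-a (resp.
   w-b), while the other coordinate r (x2, resp. x1+x2) grows only from 0 to delta.
   The cone inequality (sqrt u + sqrt v)^2 <= (1+e) u + (1+1/e) v with e = sqrt delta
   splits the integrand into (1+e) p' f(p - r) plus an error of size M r'/e; the main
   part is compared with the integral of f by a change of variables, the lag r <= delta
   costing only O(delta) per jump of f. *)

definition pwconst :: "(real \<Rightarrow> real) \<Rightarrow> real set \<Rightarrow> bool" where
  "pwconst f S \<longleftrightarrow> finite S \<and> (\<forall>t. t \<notin> S \<longrightarrow> (\<forall>\<^sub>F t' in nhds t. f t' = f t))"

lemma pwconst_deriv: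
  assumes "pwconst f S" "t \<notin> S"
  shows "(f has_real_derivative 0) (at t)"
proof -
  have "\<forall>\<^sub>F t' in nhds t. f t' = f t" using assms unfolding pwconst_def by auto
  moreover have "((\<lambda>_. f t) has_real_derivative 0) (at t)" by simp
  ultimately show ?thesis
    using DERIV_cong_ev[of t t "\<lambda>_. f t" f 0 0] by (simp add: eq_commute)
qed

lemma pwconst_isCont: "pwconst f S \<Longrightarrow> t \<notin> S \<Longrightarrow> isCont f t"
  using pwconst_deriv DERIV_isCont by blast

lemma pwconst_const_on:
  assumes "pwconst f S" "x \<le> y" "\<And>b. b \<in> S \<Longrightarrow> b < x \<or> b > y"
  shows "f x = f y"
proof (cases "x = y")
  case False
  then have "x < y" using assms by auto
  moreover have "continuous_on {x..y} f"
    using pwconst_isCont[OF assms(1)] assms(3) by (intro continuous_at_imp_continuous_on) force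
  moreover have "(f has_real_derivative 0) (at u)" if "x < u" "u < y" for u
    using pwconst_deriv[OF assms(1)] assms(3) that by force
  ultimately show ?thesis using DERIV_isconst_end[of x y f] by auto
qed simp

lemma pwconst_comp:
  assumes "pwconst f S"
  shows "pwconst (\<lambda>t. h (f t)) S"
  unfolding pwconst_def
proof (intro conjI allI impI)
  fix t assume "t \<notin> S"
  then have "\<forall>\<^sub>F t' in nhds t. f t' = f t" using assms unfolding pwconst_def by auto
  then show "\<forall>\<^sub>F t' in nhds t. h (f t') = h (f t)" by (rule eventually_mono) simp
qed (use assms in \<open>simp add: pwconst_def\<close>)

lemma pwconst_add:
  assumes "pwconst f S" "pwconst g S'"
  shows "pwconst (\<lambda>t. f t + g t) (S \<union> S')"
  unfolding pwconst_def
proof (intro conjI allI impI)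
  fix t assume "t \<notin> S \<union> S'"
  then have "\<forall>\<^sub>F t' in nhds t. f t' = f t \<and> g t' = g t"
    using assms unfolding pwconst_def by (auto intro: eventually_conj)
  then show "\<forall>\<^sub>F t' in nhds t. f t' + g t' = f t + g t" by (rule eventually_mono) simp
qed (use assms in \<open>simp add: pwconst_def\<close>)

lemma pwconst_sum:
  assumes "finite I" "\<And>i. i \<in> I \<Longrightarrow> pwconst (f i) (S i)"
  shows "pwconst (\<lambda>t. \<Sum>i\<in>I. f i t) (\<Union>i\<in>I. S i)"
  unfolding pwconst_def
proof (intro conjI allI impI)
  show "finite (\<Union>i\<in>I. S i)" using assms unfolding pwconst_def by auto
  fix t assume t: "t \<notin> (\<Union>i\<in>I. S i)"
  have "\<forall>\<^sub>F t' in nhds t. \<forall>i\<in>I. f i t' = f i t"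
    using assms t unfolding pwconst_def by (intro eventually_ball_finite) auto
  then show "\<forall>\<^sub>F t' in nhds t. (\<Sum>i\<in>I. f i t') = (\<Sum>i\<in>I. f i t)"
    by (rule eventually_mono) (auto intro: sum.cong)
qed

lemma pwconst_indicator:
  assumes "finite E" "\<And>t. t \<notin> E \<Longrightarrow> t \<in> interior A \<or> t \<in> interior (- A)"
  shows "pwconst (indicator A :: real \<Rightarrow> real) E"
  unfolding pwconst_def
proof (intro conjI allI impI)
  fix t assume "t \<notin> E"
  then consider "t \<in> interior A" | "t \<in> interior (- A)" using assms(2) by blast
  then show "\<forall>\<^sub>F t' in nhds t. indicator A t' = (indicator A t :: real)"
  proof cases
    case 1
    have "\<forall>\<^sub>F t' in nhds t. t' \<in> interior (A)"
      by (rule eventually_nhds_in_open[OF open_interior 1])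
    then show ?thesis
      by (rule eventually_mono) (use 1 interior_subset[of "A"] in \<open>auto simp: indicator_def\<close>)
  next
    case 2
    have "\<forall>\<^sub>F t' in nhds t. t' \<in> interior (- A)"
      by (rule eventually_nhds_in_open[OF open_interior 2])
    then show ?thesis
      by (rule eventually_mono) (use 2 interior_subset[of "- A"] in \<open>auto simp: indicator_def\<close>)
  qed
qed (use assms in simp)

lemma pwconst_indicator_Icc: "pwconst (indicator {\<alpha>..\<beta>} :: real \<Rightarrow> real) {\<alpha>, \<beta>}"
proof (rule pwconst_indicator)
  fix t :: real assume t: "t \<notin> {\<alpha>, \<beta>}"
  then consider "t \<in> {\<alpha><..<\<beta>}" | "t \<in> {..<\<alpha>}" | "t \<in> {\<beta><..}" by force
  then show "t \<in> interior {\<alpha>..\<beta>} \<or> t \<in> interior (- {\<alpha>..\<beta>})"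
  proof cases
    case 1 then show ?thesis by (metis interiorI greaterThanLessThan_subseteq_atLeastAtMost_iff open_greaterThanLessThan order_refl)
  next
    case 2 then show ?thesis by (intro disjI2 interiorI[of "{..<\<alpha>}"]) auto
  next
    case 3 then show ?thesis by (intro disjI2 interiorI[of "{\<beta><..}"]) auto
  qed
qed simp

lemma pwconst_affine:
  assumes "pwconst f S" "\<sigma> \<noteq> 0"
  shows "pwconst (\<lambda>t. f (\<sigma> * t + \<tau>)) ((\<lambda>s. (s - \<tau>) / \<sigma>) ` S)"
  unfolding pwconst_def
proof (intro conjI allI impI)
  show "finite ((\<lambda>s. (s - \<tau>) / \<sigma>) ` S)" using assms unfolding pwconst_def by auto
  fix t assume t: "t \<notin> (\<lambda>s. (s - \<tau>) / \<sigma>) ` S"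
  have "\<sigma> * t + \<tau> \<notin> S"
  proof
    assume "\<sigma> * t + \<tau> \<in> S"
    moreover have "t = ((\<sigma> * t + \<tau>) - \<tau>) / \<sigma>" using assms(2) by simp
    ultimately show False using t by blast
  qed
  then have "\<forall>\<^sub>F u in nhds (\<sigma> * t + \<tau>). f u = f (\<sigma> * t + \<tau>)"
    using assms unfolding pwconst_def by auto
  moreover have "((\<lambda>u. \<sigma> * u + \<tau>) \<longlongrightarrow> \<sigma> * t + \<tau>) (nhds t)"
    by (intro tendsto_intros) (simp add: tendsto_ident_at filterlim_ident)
  ultimately show "\<forall>\<^sub>F u in nhds t. f (\<sigma> * u + \<tau>) = f (\<sigma> * t + \<tau>)"
    unfolding filterlim_iff by blast
qed

text \<open>Bounded piecewise constant functions are integrable on compact intervals: they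
  are continuous off a finite, hence negligible, set.\<close>
lemma pwconst_integrable:
  assumes "pwconst f S" "\<And>t. \<bar>f t\<bar> \<le> B"
  shows "f integrable_on {\<alpha>..\<beta>}"
proof -
  have fin: "finite S" using assms unfolding pwconst_def by auto
  have "continuous_on ({\<alpha>..\<beta>} - S) f"
    using pwconst_isCont[OF assms(1)] by (simp add: continuous_at_imp_continuous_on)
  then have "f \<in> borel_measurable (lebesgue_on ({\<alpha>..\<beta>} - S))"
    by (intro continuous_imp_measurable_on_sets_lebesgue) (auto intro: sets.Diff simp: fin finite_imp_closed)
  then have "f measurable_on ({\<alpha>..\<beta>} - S)"
    by (subst measurable_on_iff_borel_measurable) (auto intro: sets.Diff simp: fin finite_imp_closed)
  then have "f measurable_on {\<alpha>..\<beta>}"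
    by (rule measurable_on_spike_set) (auto intro: negligible_subset[OF negligible_finite[OF fin]])
  then have "f \<in> borel_measurable (lebesgue_on {\<alpha>..\<beta>})"
    by (subst measurable_on_iff_borel_measurable[symmetric]) auto
  then show ?thesis
    by (rule measurable_bounded_by_integrable_imp_integrable[where g="\<lambda>_. B"]) (use assms(2) in auto)
qed

lemma ereal_interval_interior:
  fixes \<alpha> \<beta> :: ereal
  assumes "t \<noteq> real_of_ereal \<alpha>" "t \<noteq> real_of_ereal \<beta>"
  shows "t \<in> interior {y. \<alpha> < ereal y \<and> ereal y < \<beta>} \<or>
         t \<in> interior (- {y. \<alpha> < ereal y \<and> ereal y < \<beta>})"
    (is "t \<in> interior ?A \<or> _")
proof -
  have ce: "continuous_on UNIV (\<lambda>y::real. ereal y)" by (intro continuous_intros)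
  have cc: "continuous_on UNIV (\<lambda>y::real. e)" for e :: ereal by (intro continuous_intros)
  have "ereal t \<noteq> \<alpha>" "ereal t \<noteq> \<beta>" using assms by auto
  then consider "\<alpha> < ereal t \<and> ereal t < \<beta>" | "ereal t < \<alpha>" | "\<beta> < ereal t"
    by (meson linorder_neqE)
  then show ?thesis
  proof cases
    case 1
    have "open ?A" unfolding Collect_conj_eq
      by (intro open_Int open_Collect_less ce cc)
    then show ?thesis using 1 by (simp add: interior_open)
  next
    case 2
    have "open {y. ereal y < \<alpha>}" by (rule open_Collect_less[OF ce cc])
    then show ?thesis using 2 by (intro disjI2 interiorI[of "{y. ereal y < \<alpha>}"]) auto
  next
    case 3
    have "open {y. \<beta> < ereal y}" by (rule open_Collect_less[OF cc ce])
    then show ?thesis using 3 by (intro disjI2 interiorI[of "{y. \<beta> < ereal y}"]) auto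
  qed
qed

lemma ereal_point_interior:
  fixes \<alpha> :: ereal
  assumes "t \<noteq> real_of_ereal \<alpha>"
  shows "t \<in> interior (- {y. ereal y = \<alpha>})"
proof -
  have "open {y. ereal y \<noteq> \<alpha>}" by (intro open_Collect_neq continuous_intros)
  then show ?thesis using assms by (intro interiorI[of "{y. ereal y \<noteq> \<alpha>}"]) auto
qed

lemma step_speed_pwconst:
  assumes "step_speed c"
  shows "\<exists>S. pwconst c S"
proof -
  obtain L :: nat and a :: "nat \<Rightarrow> ereal" and r :: "nat \<Rightarrow> real" where
    ceq: "\<forall>x. c x = (\<Sum>m=1..L-1. r m * indicator {y. a m < ereal y \<and> ereal y < a (m+1)} x)
                + (\<Sum>m=2..L-1. min (r (m-1)) (r m) * indicator {y. ereal y = a m} x)"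
    using assms unfolding step_speed_def by blast
  define E where "E m = {real_of_ereal (a m), real_of_ereal (a (m+1))}" for m
  have "pwconst (\<lambda>x. r m * indicator {y. a m < ereal y \<and> ereal y < a (m+1)} x) (E m)" for m
    by (intro pwconst_comp[where h="\<lambda>v. r m * v"] pwconst_indicator)
       (use ereal_interval_interior[of _ "a m" "a (m+1)"] in \<open>auto simp: E_def\<close>)
  then have "pwconst (\<lambda>x. \<Sum>m=1..L-1. r m * indicator {y. a m < ereal y \<and> ereal y < a (m+1)} x)
      (\<Union>m\<in>{1..L-1}. E m)"
    by (intro pwconst_sum) auto
  moreover have "pwconst (\<lambda>x. min (r (m-1)) (r m) * indicator {y. ereal y = a m} x)
      {real_of_ereal (a m)}" for m
    by (intro pwconst_comp[where h="\<lambda>v. min (r (m-1)) (r m) * v"] pwconst_indicator)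
       (auto intro: ereal_point_interior)
  then have "pwconst (\<lambda>x. \<Sum>m=2..L-1. min (r (m-1)) (r m) * indicator {y. ereal y = a m} x)
      (\<Union>m\<in>{2..L-1}. {real_of_ereal (a m)})"
    by (intro pwconst_sum) auto
  ultimately have "pwconst c ((\<Union>m\<in>{1..L-1}. E m) \<union> (\<Union>m\<in>{2..L-1}. {real_of_ereal (a m)}))"
    using pwconst_add ceq by presburger
  then show ?thesis by blast
qed

text \<open>Every real \<open>x\<close> lies in some step \<open>(a j, a (j+1))\<close> or on an inner breakpoint \<open>a j\<close>
  with \<open>x < a (j+1)\<close>: take the first \<open>j\<close> whose right endpoint exceeds \<open>x\<close>.\<close>
lemma breakpoint_cover:
  fixes a :: "nat \<Rightarrow> ereal"
  assumes L2: "L \<ge> 2" and a1: "a 1 = -\<infinity>" and aL: "a L = \<infinity>"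
  shows "\<exists>j\<in>{1..L-1}. ereal x < a (j+1) \<and> (a j < ereal x \<or> (2 \<le> j \<and> ereal x = a j))"
proof -
  define J where "J = {j \<in> {1..L-1}. ereal x < a (j+1)}"
  have "L - 1 \<in> J" "finite J" using L2 aL unfolding J_def by auto
  define j where "j = Min J"
  have "j \<in> J" unfolding j_def using Min_in[OF \<open>finite J\<close>] \<open>L - 1 \<in> J\<close> by blast
  then have j1: "j \<in> {1..L-1}" "ereal x < a (j+1)" unfolding J_def by auto
  have "a j < ereal x \<or> (2 \<le> j \<and> ereal x = a j)"
  proof (cases "j = 1")
    case False
    then have "j - 1 \<notin> J" using Min_le[OF \<open>finite J\<close>, of "j-1"] j1 unfolding j_def by fastforce
    then show ?thesis using j1 False unfolding J_def by auto
  qed (use a1 in simp)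
  then show ?thesis using j1 by blast
qed

text \<open>A step speed is bounded below by its smallest rate: inside a step the speed is a
  rate, and on an inner breakpoint it is the minimum of two rates.\<close>
lemma step_speed_lower_bound:
  assumes "step_speed c"
  shows "\<exists>m>0. \<forall>x. m \<le> c x"
proof -
  obtain L :: nat and a :: "nat \<Rightarrow> ereal" and r :: "nat \<Rightarrow> real" where
    L2: "L \<ge> 2" and a1: "a 1 = -\<infinity>" and aL: "a L = \<infinity>"
    and rpos: "\<forall>m. 1 \<le> m \<and> m \<le> L - 1 \<longrightarrow> r m > 0"
    and ceq: "\<forall>x. c x = (\<Sum>m=1..L-1. r m * indicator {y. a m < ereal y \<and> ereal y < a (m+1)} x)
                + (\<Sum>m=2..L-1. min (r (m-1)) (r m) * indicator {y. ereal y = a m} x)"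
    using assms unfolding step_speed_def by blast
  define mm where "mm = Min (r ` {1..L-1})"
  have mpos: "0 < mm" unfolding mm_def using rpos L2 by (subst Min_gr_iff) auto
  have mle: "mm \<le> r j" if "j \<in> {1..L-1}" for j unfolding mm_def using that by auto
  have "mm \<le> c x" for x
  proof -
    define A where "A = (\<Sum>m=1..L-1. r m * indicator {y. a m < ereal y \<and> ereal y < a (m+1)} x)"
    define B where "B = (\<Sum>m=2..L-1. min (r (m-1)) (r m) * indicator {y. ereal y = a m} x)"
    have A_terms: "0 \<le> r m * indicator {y. a m < ereal y \<and> ereal y < a (m+1)} x"
      if "m \<in> {1..L-1}" for m
      using rpos that by (auto simp: indicator_def less_imp_le)
    have B_terms: "0 \<le> min (r (m-1)) (r m) * indicator {y. ereal y = a m} x"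
      if "m \<in> {2..L-1}" for m
      using rpos that by (auto simp: indicator_def less_imp_le)
    have cx: "c x = A + B" using ceq by (simp add: A_def B_def)
    have A0: "0 \<le> A" "0 \<le> B" unfolding A_def B_def
      by (rule sum_nonneg, erule A_terms) (rule sum_nonneg, erule B_terms)
    obtain j where j1: "j \<in> {1..L-1}" "ereal x < a (j+1)"
      and "a j < ereal x \<or> (2 \<le> j \<and> ereal x = a j)"
      using breakpoint_cover[OF L2 a1 aL] by blast
    then show "mm \<le> c x"
    proof (elim disjE)
      assume "a j < ereal x"
      then have "r j \<le> A"
        using member_le_sum[OF j1(1), of "\<lambda>m. r m * indicator {y. a m < ereal y \<and> ereal y < a (m+1)} x"]
          A_terms j1 unfolding A_def by (simp add: indicator_def)
      then show ?thesis using mle[OF j1(1)] A0 cx by linarith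
    next
      assume h: "2 \<le> j \<and> ereal x = a j"
      then have j2: "j \<in> {2..L-1}" using j1 by auto
      then have "min (r (j-1)) (r j) \<le> B"
        using member_le_sum[OF j2, of "\<lambda>m. min (r (m-1)) (r m) * indicator {y. ereal y = a m} x"]
          B_terms h unfolding B_def by (simp add: indicator_def)
      moreover have "mm \<le> r (j-1)" "mm \<le> r j" using mle[of "j-1"] mle[of j] j2 by force+
      ultimately show ?thesis using A0 cx by linarith
    qed
  qed
  then show ?thesis using mpos by blast
qed

lemma nondecreasing_from_deriv:
  assumes cont: "continuous_on {\<alpha>..\<beta>} h" and finT: "finite T"
    and der: "\<And>s. s \<in> {\<alpha><..<\<beta>} - T \<Longrightarrow> (h has_real_derivative h' s) (at s)"
    and pos: "\<And>s. s \<in> {\<alpha><..<\<beta>} - T \<Longrightarrow> 0 \<le> h' s"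
    and st: "\<alpha> \<le> s" "s \<le> t" "t \<le> \<beta>"
  shows "h s \<le> h t"
proof -
  define k where "k x = (if x \<in> {\<alpha><..<\<beta>} - T then h' x else 0)" for x
  have "(k has_integral (h t - h s)) {s..t}"
  proof (rule fundamental_theorem_of_calculus_interior_strong[OF finT])
    show "continuous_on {s..t} h" using cont st by (auto intro: continuous_on_subset)
    fix x assume "x \<in> {s<..<t} - T"
    then have x: "x \<in> {\<alpha><..<\<beta>} - T" using st by auto
    then show "(h has_vector_derivative k x) (at x)"
      using der[OF x] by (simp add: k_def has_real_derivative_iff_has_vector_derivative)
  qed (use st in simp)
  moreover have "\<And>x. x \<in> {s..t} \<Longrightarrow> 0 \<le> k x" using pos by (simp add: k_def)
  ultimately have "0 \<le> h t - h s" by (rule has_integral_nonneg)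
  then show ?thesis by simp
qed

lemma has_integral_comp_strict_mono:
  assumes pw: "pwconst f S" and bnd: "\<And>t. \<bar>f t\<bar> \<le> B"
    and cont: "continuous_on {0..1} p" and finT: "finite T"
    and der: "\<And>s. s \<in> {0<..<1} - T \<Longrightarrow> (p has_real_derivative p' s) (at s)"
    and mono: "\<And>s t. 0 \<le> s \<Longrightarrow> s < t \<Longrightarrow> t \<le> 1 \<Longrightarrow> p s < p t"
  shows "((\<lambda>s. p' s * f (p s)) has_integral (integral {p 0..p 1} f)) {0..1}"
proof -
  define G where "G = (\<lambda>u. integral {p 0..u} f)"
  have finS: "finite S" using pw unfolding pwconst_def by auto
  have int: "f integrable_on {p 0..p 1}" by (rule pwconst_integrable[OF pw bnd])
  have rng: "p s \<in> {p 0..p 1}" if "s \<in> {0..1}" for s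
    using that mono[of 0 s] mono[of s 1] by (cases "s = 0"; cases "s = 1") auto
  have "inj_on p {0..1}"
  proof (rule inj_onI)
    fix u v assume "u \<in> {0..1}" "v \<in> {0..1}" "p u = p v"
    then show "u = v" using mono[of u v] mono[of v u] by (cases u v rule: linorder_cases) auto
  qed
  then have finE: "finite (T \<union> (p -` S \<inter> {0..1}))"
    using finT finite_vimage_IntI[OF finS] by auto
  have Gc: "continuous_on {0..1} (G \<circ> p)"
    by (rule continuous_on_compose[OF cont],
        rule continuous_on_subset[OF indefinite_integral_continuous_1[OF int, folded G_def]])
       (use rng in auto)
  have "((G \<circ> p) has_vector_derivative p' s * f (p s)) (at s)"
    if s: "s \<in> {0<..<1} - (T \<union> (p -` S \<inter> {0..1}))" for s
  proof -
    have ps: "p s \<in> {p 0<..<p 1}" using s mono[of 0 s] mono[of s 1] by auto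
    then have at_ps: "at (p s) within {p 0..p 1} = at (p s)"
      by (metis at_within_interior interior_atLeastAtMost_real)
    have "(G has_vector_derivative f (p s)) (at (p s) within ({p 0..p 1} - {}))"
      unfolding G_def
      by (rule integral_has_vector_derivative_continuous_at[OF int])
         (use ps s pwconst_isCont[OF pw] in \<open>auto intro: continuous_at_imp_continuous_within\<close>)
    then have "(G has_real_derivative f (p s)) (at (p s))"
      by (simp add: at_ps has_real_derivative_iff_has_vector_derivative)
    from DERIV_chain[OF this der] s have "((G \<circ> p) has_real_derivative f (p s) * p' s) (at s)"
      by auto
    then show ?thesis by (simp add: has_real_derivative_iff_has_vector_derivative mult.commute)
  qed
  then have "((\<lambda>s. p' s * f (p s)) has_integral ((G \<circ> p) 1 - (G \<circ> p) 0)) {0..1}"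
    by (intro fundamental_theorem_of_calculus_interior_strong[OF finE _ _ Gc]) auto
  then show ?thesis by (simp add: G_def)
qed

lemma integral_affine_reparam:
  assumes pw: "pwconst f S" and bnd: "\<And>t. \<bar>f t\<bar> \<le> B" and ab: "\<alpha> \<le> \<beta>"
  shows "integral {0..1} (\<lambda>s. (\<beta> - \<alpha>) * f (\<alpha> + s * (\<beta> - \<alpha>))) = integral {\<alpha>..\<beta>} f"
proof (cases "\<alpha> = \<beta>")
  case False
  then have lt: "\<alpha> < \<beta>" using ab by simp
  have "((\<lambda>s. (\<beta> - \<alpha>) * f (\<alpha> + s * (\<beta> - \<alpha>))) has_integral
         integral {\<alpha> + 0 * (\<beta> - \<alpha>)..\<alpha> + 1 * (\<beta> - \<alpha>)} f) {0..1}"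
  proof (rule has_integral_comp_strict_mono[OF pw bnd _ finite.emptyI])
    show "continuous_on {0..1} (\<lambda>s. \<alpha> + s * (\<beta> - \<alpha>))" by (intro continuous_intros)
    show "((\<lambda>s. \<alpha> + s * (\<beta> - \<alpha>)) has_real_derivative \<beta> - \<alpha>) (at s)" for s
      by (auto intro!: derivative_eq_intros)
    show "\<alpha> + s * (\<beta> - \<alpha>) < \<alpha> + t * (\<beta> - \<alpha>)" if "s < t" for s t
      using lt that by (simp add: mult_strict_right_mono)
  qed
  then have "((\<lambda>s. (\<beta> - \<alpha>) * f (\<alpha> + s * (\<beta> - \<alpha>))) has_integral integral {\<alpha>..\<beta>} f) {0..1}"
    by simp
  then show ?thesis by (rule integral_unique)
qed simp

text \<open>Bounding an integral by an integrable majorant valid off a finite set; the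
  integrand need not be known to be integrable (if it is not, its integral is \<open>0\<close>).\<close>
lemma integral_le_majorant:
  fixes \<Phi> B :: "real \<Rightarrow> real"
  assumes finE: "finite E" and hB: "(B has_integral IB) {0..1}"
    and le: "\<And>s. s \<in> {0..1} - E \<Longrightarrow> \<Phi> s \<le> B s"
    and nn: "\<And>s. s \<in> {0..1} - E \<Longrightarrow> 0 \<le> \<Phi> s"
  shows "integral {0..1} \<Phi> \<le> IB"
proof (cases "\<Phi> integrable_on {0..1}")
  case True
  have "((\<lambda>s. if s \<in> E then \<Phi> s else B s) has_integral IB) {0..1}"
    by (rule has_integral_spike_finite[OF finE _ hB]) simp
  then show ?thesis
    by (rule has_integral_le[OF integrable_integral[OF True]]) (use le in auto)
next
  case False
  have "((\<lambda>s. if s \<in> E then 0 else B s) has_integral IB) {0..1}"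
    by (rule has_integral_spike_finite[OF finE _ hB]) simp
  then have "0 \<le> IB" by (rule has_integral_nonneg) (use le nn in force)
  then show ?thesis using False by (simp add: not_integrable_integral)
qed

lemma integral_pwconst_bounds:
  assumes pw: "pwconst f S" and f0: "\<And>t. 0 \<le> f t" and fM: "\<And>t. f t \<le> M"
  shows "f integrable_on {u..v}" "0 \<le> integral {u..v} f"
    and "u \<le> v \<Longrightarrow> integral {u..v} f \<le> M * (v - u)"
proof -
  show fint: "f integrable_on {u..v}"
    by (rule pwconst_integrable[OF pw, of M]) (use f0 fM in \<open>auto simp: abs_le_iff intro: order_trans[OF _ fM]\<close>)
  show "0 \<le> integral {u..v} f" by (rule integral_nonneg[OF fint]) (use f0 in auto)
  show "integral {u..v} f \<le> M * (v - u)" if "u \<le> v"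
    using integral_le[OF fint integrable_const_ivl, of M] fM that by (simp add: mult.commute)
qed

text \<open>It dominates \<open>f\<close> evaluated up to \<open>2d\<close> earlier.\<close>
definition bump_majorant :: "(real \<Rightarrow> real) \<Rightarrow> real set \<Rightarrow> real \<Rightarrow> real \<Rightarrow> real \<Rightarrow> real" where
  "bump_majorant f S M d = (\<lambda>t. f t + M * (\<Sum>b\<in>S. indicator {b..b + 2*d} t))"

text \<open>A bounded piecewise constant \<open>f\<close> changes between \<open>\<xi>\<close> and \<open>\<eta> \<in> [\<xi>, \<xi> + 2d]\<close> only if
  a jump \<open>b\<close> lies in between; then \<open>\<eta> \<in> [b, b + 2d]\<close>, so the bump at \<open>b\<close> pays for it.\<close>
lemma bump_majorant_pointwise:
  assumes pw: "pwconst f S" and f0: "\<And>t. 0 \<le> f t" and fM: "\<And>t. f t \<le> M"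
    and "\<eta> - 2 * d \<le> \<xi>" "\<xi> \<le> \<eta>"
  shows "f \<xi> \<le> bump_majorant f S M d \<eta>"
proof -
  have M0: "0 \<le> M" using f0[of 0] fM[of 0] by linarith
  have sum0: "0 \<le> (\<Sum>b\<in>S. indicator {b..b + 2*d} \<eta> :: real)" by (simp add: sum_nonneg)
  show ?thesis
  proof (cases "\<exists>b\<in>S. \<xi> \<le> b \<and> b \<le> \<eta>")
    case True
    then obtain b where b: "b \<in> S" "\<xi> \<le> b" "b \<le> \<eta>" by auto
    have "finite S" using pw unfolding pwconst_def by simp
    then have "indicator {b..b + 2*d} \<eta> \<le> (\<Sum>b\<in>S. indicator {b..b + 2*d} \<eta> :: real)"
      by (intro member_le_sum[OF b(1)]) auto
    moreover have "indicator {b..b + 2*d} \<eta> = (1::real)" using b assms by (auto simp: indicator_def)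
    ultimately have "M \<le> M * (\<Sum>b\<in>S. indicator {b..b + 2*d} \<eta>)"
      using M0 by (metis mult.right_neutral mult_left_mono)
    then show ?thesis using fM[of \<xi>] f0[of \<eta>] unfolding bump_majorant_def by linarith
  next
    case False
    then have "f \<xi> = f \<eta>" by (intro pwconst_const_on[OF pw \<open>\<xi> \<le> \<eta>\<close>]) force
    then show ?thesis using M0 sum0 unfolding bump_majorant_def by simp
  qed
qed

lemma bump_majorant_basic:
  assumes pw: "pwconst f S" and f0: "\<And>t. 0 \<le> f t" and fM: "\<And>t. f t \<le> M"
  shows "pwconst (bump_majorant f S M d) (S \<union> (\<Union>b\<in>S. {b, b + 2*d}))"
    and "0 \<le> bump_majorant f S M d t" and "\<bar>bump_majorant f S M d t\<bar> \<le> M + M * card S"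
proof -
  have M0: "0 \<le> M" using f0[of 0] fM[of 0] by linarith
  show "pwconst (bump_majorant f S M d) (S \<union> (\<Union>b\<in>S. {b, b + 2*d}))"
    unfolding bump_majorant_def using pw pwconst_indicator_Icc
    by (intro pwconst_add pwconst_comp[where h="\<lambda>v. M * v"] pwconst_sum) (auto simp: pwconst_def)
  show nonneg: "0 \<le> bump_majorant f S M d t" for t
    unfolding bump_majorant_def using f0[of t] M0 by (simp add: sum_nonneg)
  have "(\<Sum>b\<in>S. indicator {b..b + 2*d} t) \<le> (\<Sum>b\<in>S. 1::real)"
    by (rule sum_mono) (simp add: indicator_def)
  then have "M * (\<Sum>b\<in>S. indicator {b..b + 2*d} t) \<le> M * card S"
    using M0 by (simp add: mult_left_mono)
  then show "\<bar>bump_majorant f S M d t\<bar> \<le> M + M * card S"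
    using nonneg[of t] fM[of t] unfolding bump_majorant_def by simp
qed

lemma integral_indicator_Icc_le:
  assumes "0 \<le> e"
  shows "integral {u..v} (indicator {b..b + e} :: real \<Rightarrow> real) \<le> e"
proof -
  have "(indicator {b..b + e} :: real \<Rightarrow> real) = (\<lambda>x. if x \<in> {b..b + e} then 1 else 0)"
    by (auto simp: indicator_def fun_eq_iff)
  then have "integral {u..v} (indicator {b..b + e} :: real \<Rightarrow> real)
      = integral ({b..b + e} \<inter> {u..v}) (\<lambda>x. 1::real)"
    by (simp only: integral_restrict_Int)
  also have "\<dots> = Henstock_Kurzweil_Integration.content {max b u..min (b + e) v}"
    by (simp add: Int_atLeastAtMost)
  also have "\<dots> \<le> e" using assms by (simp add: content_real_if min_def max_def)
  finally show ?thesis .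
qed

text \<open>The bump majorant costs \<open>M (2 |S| + 1) d\<close> beyond the integral of \<open>f\<close>: each bump has
  mass at most \<open>2 d\<close>, and the interval is lengthened by \<open>d\<close>.\<close>
lemma integral_bump_majorant:
  assumes pw: "pwconst f S" and f0: "\<And>t. 0 \<le> f t" and fM: "\<And>t. f t \<le> M"
    and "\<alpha> \<le> \<beta>" "0 < d"
  shows "integral {\<alpha>..\<beta> + d} (bump_majorant f S M d) \<le> integral {\<alpha>..\<beta>} f + M * (2 * card S + 1) * d"
proof -
  have finS: "finite S" using pw unfolding pwconst_def by auto
  have M0: "0 \<le> M" using f0[of 0] fM[of 0] by linarith
  note fint = integral_pwconst_bounds(1)[OF pw f0 fM]
  have indint: "(indicator {b..b + 2*d} :: real \<Rightarrow> real) integrable_on {u..v}" for b u v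
    by (rule pwconst_integrable[OF pwconst_indicator_Icc, where B=1]) (simp add: indicator_def)
  have sum_int: "(\<lambda>t. \<Sum>b\<in>S. indicator {b..b + 2*d} t :: real) integrable_on {u..v}" for u v
    by (rule integrable_sum[OF finS indint])
  have "integral {\<alpha>..\<beta> + d} (\<lambda>t. M * (\<Sum>b\<in>S. indicator {b..b + 2*d} t))
      = M * (\<Sum>b\<in>S. integral {\<alpha>..\<beta> + d} (indicator {b..b + 2*d}))"
    by (simp only: integral_mult_right integral_sum[OF finS indint])
  also have "\<dots> \<le> M * (card S * (2 * d))"
    using sum_mono[of S "\<lambda>b. integral {\<alpha>..\<beta> + d} (indicator {b..b + 2*d})" "\<lambda>_. 2 * d"]
      integral_indicator_Icc_le[of "2 * d"] M0 \<open>0 < d\<close> by (auto intro: mult_left_mono)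
  finally have bumps: "integral {\<alpha>..\<beta> + d} (\<lambda>t. M * (\<Sum>b\<in>S. indicator {b..b + 2*d} t))
      \<le> M * (card S * (2 * d))" .
  have "integral {\<alpha>..\<beta> + d} (bump_majorant f S M d)
      = integral {\<alpha>..\<beta> + d} f + integral {\<alpha>..\<beta> + d} (\<lambda>t. M * (\<Sum>b\<in>S. indicator {b..b + 2*d} t))"
    unfolding bump_majorant_def by (rule integral_add[OF fint integrable_on_mult_right[OF sum_int]])
  also have "\<dots> \<le> integral {\<alpha>..\<beta> + d} f + M * (card S * (2 * d))"
    using bumps by simp
  also have "integral {\<alpha>..\<beta> + d} f = integral {\<alpha>..\<beta>} f + integral {\<beta>..\<beta> + d} f"
    using Henstock_Kurzweil_Integration.integral_combine[OF \<open>\<alpha> \<le> \<beta>\<close> _ fint] \<open>0 < d\<close> by simp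
  also have "integral {\<beta>..\<beta> + d} f \<le> M * d"
    using integral_pwconst_bounds(3)[OF pw f0 fM, of \<beta> "\<beta> + d"] \<open>0 < d\<close> by simp
  finally show ?thesis by (simp add: algebra_simps)
qed

text \<open>The integrand is
  dominated by the integrable function \<open>(y' + d) \<cdot> fh(y + d s)\<close>, where \<open>fh\<close> is the bump
  majorant, which is integrated by the change of variables \<open>t = y(s) + d s\<close>; the shift
  \<open>d s\<close> makes the substitution strictly increasing.\<close>
lemma lag_integral_bound:
  assumes pw: "pwconst f S" and f0: "\<And>t. 0 \<le> f t" and fM: "\<And>t. f t \<le> M"
    and cont: "continuous_on {0..1} y" and finT: "finite T"
    and der: "\<And>s. s \<in> {0<..<1} - T \<Longrightarrow> (y has_real_derivative y' s) (at s)"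
    and ypos: "\<And>s. s \<in> {0<..<1} - T \<Longrightarrow> 0 \<le> y' s"
    and d: "0 < d"
    and lag: "\<And>s. s \<in> {0<..<1} - T \<Longrightarrow> y s - d \<le> \<xi> s \<and> \<xi> s \<le> y s"
  shows "\<exists>F I. (F has_integral I) {0..1} \<and> I \<le> integral {y 0..y 1} f + M * (2 * card S + 1) * d
     \<and> (\<forall>s\<in>{0<..<1} - T. y' s * f (\<xi> s) \<le> F s)"
proof -
  define p where "p s = y s + d * s" for s
  define fh where "fh = bump_majorant f S M d"
  have ymono: "y s \<le> y t" if "0 \<le> s" "s \<le> t" "t \<le> 1" for s t
    by (rule nondecreasing_from_deriv[OF cont finT der ypos that])
  note fh = bump_majorant_basic[OF pw f0 fM, of d, folded fh_def]
  have "((\<lambda>s. (y' s + d) * fh (p s)) has_integral integral {p 0..p 1} fh) {0..1}"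
  proof (rule has_integral_comp_strict_mono[OF fh(1) fh(3) _ finT])
    show "continuous_on {0..1} p" unfolding p_def by (intro continuous_intros cont)
    show "(p has_real_derivative (y' s + d)) (at s)" if "s \<in> {0<..<1} - T" for s
      unfolding p_def using der[OF that] by (auto intro!: derivative_eq_intros)
    show "p s < p t" if "0 \<le> s" "s < t" "t \<le> 1" for s t
      using ymono[of s t] that mult_strict_left_mono[OF \<open>s < t\<close> d] unfolding p_def by linarith
  qed
  moreover have "integral {p 0..p 1} fh \<le> integral {y 0..y 1} f + M * (2 * card S + 1) * d"
    using integral_bump_majorant[OF pw f0 fM ymono[of 0 1] d] unfolding fh_def p_def by simp
  moreover have "y' s * f (\<xi> s) \<le> (y' s + d) * fh (p s)" if s: "s \<in> {0<..<1} - T" for s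
  proof -
    have "0 \<le> d * s" "d * s \<le> d" using s d mult_left_mono[of s 1 d] by auto
    then have "p s - 2 * d \<le> \<xi> s" "\<xi> s \<le> p s" using lag[OF s] unfolding p_def by linarith+
    then have "f (\<xi> s) \<le> fh (p s)"
      unfolding fh_def by (rule bump_majorant_pointwise[OF pw f0 fM])
    then have "y' s * f (\<xi> s) \<le> y' s * fh (p s)" using ypos[OF s] by (rule mult_left_mono)
    also have "\<dots> \<le> (y' s + d) * fh (p s)" using fh(2)[of "p s"] d by (simp add: distrib_right)
    finally show ?thesis .
  qed
  ultimately show ?thesis by blast
qed

lemma sqrt_sum_square_le:
  fixes u v e :: real
  assumes "0 \<le> u" "0 \<le> v" "0 < e"
  shows "(sqrt u + sqrt v)^2 \<le> (1 + e) * u + (1 + 1/e) * v"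
proof -
  define A where "A = sqrt u"
  define B where "B = sqrt v"
  have "0 \<le> (e * A - B)^2" by simp
  then have "2 * A * B * e \<le> e^2 * A^2 + B^2" by (simp add: power2_eq_square algebra_simps)
  then have "2 * A * B \<le> e * A^2 + B^2 / e" using assms(3)
    by (simp add: field_simps power2_eq_square)
  then have "(A + B)^2 \<le> (1 + e) * A^2 + (1 + 1/e) * B^2"
    by (simp add: power2_eq_square algebra_simps)
  then show ?thesis using assms unfolding A_def B_def by simp
qed

lemma sqrt_sum_square_weighted_le:
  fixes u v e \<phi> :: real
  assumes "0 \<le> u" "0 \<le> v" "0 < e" "0 \<le> \<phi>" "\<phi> \<le> M" "u * \<phi> \<le> F"
  shows "(sqrt u + sqrt v)^2 * \<phi> \<le> (1 + e) * F + (1 + 1/e) * M * v"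
proof -
  have "(sqrt u + sqrt v)^2 * \<phi> \<le> ((1 + e) * u + (1 + 1/e) * v) * \<phi>"
    using sqrt_sum_square_le[OF assms(1-3)] assms(4) by (rule mult_right_mono)
  also have "\<dots> = (1 + e) * (u * \<phi>) + (1 + 1/e) * (v * \<phi>)" by (simp add: algebra_simps)
  also have "\<dots> \<le> (1 + e) * F + (1 + 1/e) * (v * M)"
    using assms by (intro add_mono mult_left_mono) auto
  finally show ?thesis by (simp add: algebra_simps)
qed

lemma sqrt_rate_arith:
  fixes e :: real
  assumes e: "0 < e" "e \<le> 1" and M: "0 \<le> M" and K: "0 \<le> K"
    and t: "0 \<le> t" "t \<le> e^2" and J: "0 \<le> J" "J \<le> M * L"
    and I: "I \<le> J + M * t + K * e^2"
  shows "(1 + e) * I + (1 + 1/e) * M * t \<le> J + (M * L + 4 * M + 2 * K) * e"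
proof -
  have "(1 + e) * I \<le> (1 + e) * (J + (M + K) * e^2)"
    using I mult_left_mono[OF t(2) M] e by (intro mult_left_mono) (auto simp: algebra_simps)
  also have "\<dots> = J + e * J + ((1 + e) * e) * ((M + K) * e)"
    by (simp add: algebra_simps power2_eq_square)
  also have "\<dots> \<le> J + e * (M * L) + 2 * ((M + K) * e)"
  proof -
    have "e * J \<le> e * (M * L)" using J e by (intro mult_left_mono) auto
    moreover have "(1 + e) * e \<le> 2" using mult_mono[OF e(2) e(2)] e by (simp add: algebra_simps)
    then have "((1 + e) * e) * ((M + K) * e) \<le> 2 * ((M + K) * e)"
      using M K e by (intro mult_right_mono) auto
    ultimately show ?thesis by linarith
  qed
  finally have A: "(1 + e) * I \<le> J + e * (M * L) + 2 * ((M + K) * e)" .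
  have "(1 + 1/e) * M * t \<le> (1 + 1/e) * M * e^2"
    using t e M by (intro mult_left_mono) auto
  also have "\<dots> = M * e * e + M * e" using e by (simp add: field_simps power2_eq_square)
  also have "\<dots> \<le> 2 * M * e" using mult_left_mono[OF e(2), of "M * e"] M e by simp
  finally have B: "(1 + 1/e) * M * t \<le> 2 * M * e" .
  show ?thesis using A B by (simp add: algebra_simps)
qed

text \<open>Split the square with \<open>e = \<surd>d\<close>: the \<open>p'\<close>-part is handled by the lag estimate (the lag
  is \<open>r \<le> d\<close>), the \<open>r'\<close>-part integrates to at most \<open>M t / e \<le> M e\<close>.\<close>
lemma two_coordinate_bound:
  assumes pw: "pwconst f S" and f0: "\<And>t. 0 \<le> f t" and fM: "\<And>t. f t \<le> M"
    and cont: "continuous_on {0..1} p" "continuous_on {0..1} r" and finT: "finite T"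
    and der_p: "\<And>s. s \<in> {0<..<1} - T \<Longrightarrow> (p has_real_derivative p' s) (at s)"
    and der_r: "\<And>s. s \<in> {0<..<1} - T \<Longrightarrow> (r has_real_derivative r' s) (at s)"
    and nonneg: "\<And>s. s \<in> {0<..<1} - T \<Longrightarrow> 0 \<le> p' s \<and> 0 \<le> r' s"
    and ends: "p 0 = \<alpha>" "p 1 = \<beta> + t" "r 0 = 0" "r 1 = t"
    and "\<alpha> \<le> \<beta>" and t: "0 \<le> t" "t \<le> d" and d: "0 < d" "d \<le> 1"
    and \<Phi>: "\<And>s. s \<in> {0<..<1} - T \<Longrightarrow> \<Phi> s = (sqrt (p' s) + sqrt (r' s))^2 * f (p s - r s)"
  shows "integral {0..1} \<Phi> \<le> integral {\<alpha>..\<beta>} f + M * (\<beta> - \<alpha> + 4 * card S + 6) * sqrt d"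
proof -
  define e where "e = sqrt d"
  define K where "K = M * (2 * card S + 1)"
  have e: "0 < e" "e \<le> 1" "e^2 = d" unfolding e_def using d by auto
  have M0: "0 \<le> M" using f0[of 0] fM[of 0] by linarith
  have r_range: "0 \<le> r s \<and> r s \<le> t" if "s \<in> {0..1}" for s
    using nondecreasing_from_deriv[OF cont(2) finT der_r, of 0 s] nondecreasing_from_deriv[OF cont(2) finT der_r, of s 1]
      nonneg that ends by auto
  have lag: "p s - d \<le> p s - r s \<and> p s - r s \<le> p s" if "s \<in> {0<..<1} - T" for s
    using r_range[of s] that t by auto
  obtain F I where F: "(F has_integral I) {0..1}"
    and I: "I \<le> integral {\<alpha>..\<beta> + t} f + K * d"
    and F_maj: "\<forall>s\<in>{0<..<1} - T. p' s * f (p s - r s) \<le> F s"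
    using lag_integral_bound[OF pw f0 fM cont(1) finT der_p _ d(1) lag] nonneg ends
    unfolding K_def by auto
  have "integral {\<alpha>..\<beta> + t} f = integral {\<alpha>..\<beta>} f + integral {\<beta>..\<beta> + t} f"
    using Henstock_Kurzweil_Integration.integral_combine[OF \<open>\<alpha> \<le> \<beta>\<close> _
        integral_pwconst_bounds(1)[OF pw f0 fM]] t by simp
  then have I': "I \<le> integral {\<alpha>..\<beta>} f + M * t + K * e^2"
    using I integral_pwconst_bounds(3)[OF pw f0 fM, of \<beta> "\<beta> + t"] t e by simp
  have R: "(r' has_integral t) {0..1}"
    using fundamental_theorem_of_calculus_interior_strong[OF finT _ _ cont(2), of r'] der_r ends
    by (simp add: has_real_derivative_iff_has_vector_derivative)
  have "integral {0..1} \<Phi> \<le> (1 + e) * I + (1 + 1/e) * M * t"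
  proof (rule integral_le_majorant[of "T \<union> {0, 1}"])
    show "((\<lambda>s. (1 + e) * F s + (1 + 1/e) * M * r' s) has_integral (1 + e) * I + (1 + 1/e) * M * t) {0..1}"
      using has_integral_add[OF has_integral_mult_right[OF F, of "1 + e"]
          has_integral_mult_right[OF R, of "(1 + 1/e) * M"]] by (simp add: mult.assoc)
    fix s assume "s \<in> {0..1} - (T \<union> {0, 1})"
    then have s: "s \<in> {0<..<1} - T" by auto
    show "0 \<le> \<Phi> s" using \<Phi>[OF s] f0 by simp
    show "\<Phi> s \<le> (1 + e) * F s + (1 + 1/e) * M * r' s"
      unfolding \<Phi>[OF s] using nonneg[OF s] e(1) f0 fM F_maj s
      by (intro sqrt_sum_square_weighted_le) auto
  qed (use finT in simp)
  also have "\<dots> \<le> integral {\<alpha>..\<beta>} f + (M * (\<beta> - \<alpha>) + 4 * M + 2 * K) * e"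
    using sqrt_rate_arith[OF e(1,2) M0 _ t(1) _ _ _ I'] t e M0
      integral_pwconst_bounds(2)[OF pw f0 fM, of \<alpha> \<beta>] integral_pwconst_bounds(3)[OF pw f0 fM \<open>\<alpha> \<le> \<beta>\<close>]
    unfolding K_def by simp
  finally show ?thesis unfolding e_def K_def by (simp add: algebra_simps)
qed

lemma Wcone_iff: "v \<in> Wcone \<longleftrightarrow> 0 \<le> snd v \<and> 0 \<le> fst v + snd v"
  by (cases v) (auto simp: Wcone_def)

lemma admissible_path_derivative:
  assumes "admissible_path P Q x"
  obtains T where "finite T" "continuous_on {0..1} x" "x 0 = P" "x 1 = Q"
    "\<And>s. s \<in> {0<..<1} - T \<Longrightarrow> (x has_vector_derivative vector_derivative x (at s)) (at s)"
    "\<And>s. s \<in> {0<..<1} - T \<Longrightarrow> vector_derivative x (at s) \<in> Wcone"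
proof -
  have W: "\<forall>s\<in>{0..1}. x differentiable (at s) \<longrightarrow> vector_derivative x (at s) \<in> Wcone"
    using assms unfolding admissible_path_def by auto
  obtain T where cont: "continuous_on {0..1} x" and finT: "finite T"
    and T0: "0 \<in> T" and T1: "1 \<in> T"
    and pieces: "\<forall>s\<in>T. \<forall>t\<in>T. s < t \<and> {s<..<t} \<inter> T = {} \<longrightarrow>
           (\<exists>D. continuous_on {s..t} D \<and> (\<forall>u\<in>{s..t}. (x has_vector_derivative D u) (at u within {s..t})))"
    using assms unfolding admissible_path_def pw_C1_def by blast
  have "(x has_vector_derivative vector_derivative x (at s)) (at s)" if s: "s \<in> {0<..<1} - T" for s
  proof -
    text \<open>The partition points adjacent to \<open>s\<close> bound a piece on which \<open>x\<close> is \<open>C\<^sup>1\<close>.\<close>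
    define lo where "lo = Max {t\<in>T. t < s}"
    define hi where "hi = Min {t\<in>T. s < t}"
    have fin: "finite {t\<in>T. t < s}" "finite {t\<in>T. s < t}" using finT by auto
    have ne: "0 \<in> {t\<in>T. t < s}" "1 \<in> {t\<in>T. s < t}" using s T0 T1 by auto
    have lo: "lo \<in> T" "lo < s" using Max_in[OF fin(1)] ne unfolding lo_def by auto
    have hi: "hi \<in> T" "s < hi" using Min_in[OF fin(2)] ne unfolding hi_def by auto
    have "{lo<..<hi} \<inter> T = {}"
    proof (rule ccontr)
      assume "{lo<..<hi} \<inter> T \<noteq> {}"
      then obtain t where t: "t \<in> T" "lo < t" "t < hi" by auto
      have "t \<noteq> s" using t s by auto
      then show False
        using Max_ge[OF fin(1), of t] Min_le[OF fin(2), of t] t unfolding lo_def hi_def by force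
    qed
    then obtain D where "\<forall>u\<in>{lo..hi}. (x has_vector_derivative D u) (at u within {lo..hi})"
      using pieces lo hi by fastforce
    then have "(x has_vector_derivative D s) (at s within {lo..hi})" using lo hi by auto
    then have "(x has_vector_derivative D s) (at s within {lo<..<hi})"
      by (rule has_vector_derivative_within_subset) auto
    then have "(x has_vector_derivative D s) (at s)"
      using lo hi at_within_open[of s "{lo<..<hi}"] by simp
    then show ?thesis using vector_derivative_at by fastforce
  qed
  moreover have "vector_derivative x (at s) \<in> Wcone" if "s \<in> {0<..<1} - T" for s
    using W calculation[OF that] that by (auto intro: differentiableI_vector)
  ultimately show ?thesis
    using that finT cont assms unfolding admissible_path_def by blast
qed

lemma has_real_derivative_fst:
  "(x has_vector_derivative D) F \<Longrightarrow> ((\<lambda>s. fst (x s)) has_real_derivative fst D) F"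
  unfolding has_real_derivative_iff_has_vector_derivative has_vector_derivative_def
  by (drule has_derivative_fst) simp

lemma has_real_derivative_snd:
  "(x has_vector_derivative D) F \<Longrightarrow> ((\<lambda>s. snd (x s)) has_real_derivative snd D) F"
  unfolding has_real_derivative_iff_has_vector_derivative has_vector_derivative_def
  by (drule has_derivative_snd) simp

text \<open>Paths from \<open>(a, 0)\<close> to \<open>(z, t)\<close>: take \<open>p = x\<^sub>1 + x\<^sub>2\<close> and \<open>r = x\<^sub>2\<close>, so \<open>x\<^sub>1 = p - r\<close>.\<close>
lemma horizontal_path_bound:
  assumes pw: "pwconst f S" and f0: "\<And>t. 0 \<le> f t" and fM: "\<And>t. f t \<le> M"
    and adm: "admissible_path (a, 0) (z, t) x" and "a \<le> z" "0 \<le> t" "t \<le> d" "0 < d" "d \<le> 1"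
  shows "integral {0..1} (\<lambda>s. gam (vector_derivative x (at s)) * f (fst (x s)))
     \<le> integral {a..z} f + M * (z - a + 4 * card S + 6) * sqrt d"
proof -
  obtain T where finT: "finite T" and cont: "continuous_on {0..1} x" and ends: "x 0 = (a, 0)" "x 1 = (z, t)"
    and dv: "\<And>s. s \<in> {0<..<1} - T \<Longrightarrow> (x has_vector_derivative vector_derivative x (at s)) (at s)"
    and W: "\<And>s. s \<in> {0<..<1} - T \<Longrightarrow> vector_derivative x (at s) \<in> Wcone"
    using admissible_path_derivative[OF adm] by blast
  let ?D = "\<lambda>s. vector_derivative x (at s)"
  show ?thesis
  proof (rule two_coordinate_bound[OF pw f0 fM _ _ finT])
    show "continuous_on {0..1} (\<lambda>s. fst (x s) + snd (x s))" "continuous_on {0..1} (\<lambda>s. snd (x s))"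
      by (intro continuous_intros cont)+
    fix s assume s: "s \<in> {0<..<1} - T"
    show "((\<lambda>s. fst (x s) + snd (x s)) has_real_derivative fst (?D s) + snd (?D s)) (at s)"
      using has_real_derivative_fst[OF dv[OF s]] has_real_derivative_snd[OF dv[OF s]] by (rule DERIV_add)
    show "((\<lambda>s. snd (x s)) has_real_derivative snd (?D s)) (at s)"
      by (rule has_real_derivative_snd[OF dv[OF s]])
    show "0 \<le> fst (?D s) + snd (?D s) \<and> 0 \<le> snd (?D s)" using W[OF s] by (simp add: Wcone_iff)
    show "gam (?D s) * f (fst (x s)) = (sqrt (fst (?D s) + snd (?D s)) + sqrt (snd (?D s)))^2
        * f ((fst (x s) + snd (x s)) - snd (x s))"
      by (simp add: gam_def)
  qed (use ends assms in auto)
qed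

text \<open>Paths from \<open>(-b, b)\<close> to \<open>(-w, w + t)\<close>: take \<open>p = x\<^sub>2\<close> and \<open>r = x\<^sub>1 + x\<^sub>2\<close>, so \<open>-x\<^sub>1 = p - r\<close>.\<close>
lemma diagonal_path_bound:
  assumes pw: "pwconst f S" and f0: "\<And>t. 0 \<le> f t" and fM: "\<And>t. f t \<le> M"
    and adm: "admissible_path (-b, b) (-w, w + t) x" and "b \<le> w" "0 \<le> t" "t \<le> d" "0 < d" "d \<le> 1"
  shows "integral {0..1} (\<lambda>s. gam (vector_derivative x (at s)) * f (- fst (x s)))
     \<le> integral {b..w} f + M * (w - b + 4 * card S + 6) * sqrt d"
proof -
  obtain T where finT: "finite T" and cont: "continuous_on {0..1} x" and ends: "x 0 = (-b, b)" "x 1 = (-w, w + t)"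
    and dv: "\<And>s. s \<in> {0<..<1} - T \<Longrightarrow> (x has_vector_derivative vector_derivative x (at s)) (at s)"
    and W: "\<And>s. s \<in> {0<..<1} - T \<Longrightarrow> vector_derivative x (at s) \<in> Wcone"
    using admissible_path_derivative[OF adm] by blast
  let ?D = "\<lambda>s. vector_derivative x (at s)"
  show ?thesis
  proof (rule two_coordinate_bound[OF pw f0 fM _ _ finT])
    show "continuous_on {0..1} (\<lambda>s. snd (x s))" "continuous_on {0..1} (\<lambda>s. fst (x s) + snd (x s))"
      by (intro continuous_intros cont)+
    fix s assume s: "s \<in> {0<..<1} - T"
    show "((\<lambda>s. fst (x s) + snd (x s)) has_real_derivative fst (?D s) + snd (?D s)) (at s)"
      using has_real_derivative_fst[OF dv[OF s]] has_real_derivative_snd[OF dv[OF s]] by (rule DERIV_add)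
    show "((\<lambda>s. snd (x s)) has_real_derivative snd (?D s)) (at s)"
      by (rule has_real_derivative_snd[OF dv[OF s]])
    show "0 \<le> snd (?D s) \<and> 0 \<le> fst (?D s) + snd (?D s)" using W[OF s] by (simp add: Wcone_iff)
    show "gam (?D s) * f (- fst (x s)) = (sqrt (snd (?D s)) + sqrt (fst (?D s) + snd (?D s)))^2
        * f (snd (x s) - (fst (x s) + snd (x s)))"
      by (simp add: gam_def add.commute)
  qed (use ends assms in auto)
qed

definition path_value :: "(real \<Rightarrow> real) \<Rightarrow> real \<Rightarrow> (real \<Rightarrow> real \<times> real) \<Rightarrow> real" where
  "path_value c q x = integral {0..1} (\<lambda>s. gam (vector_derivative x (at s)) / c (fst (x s) - q))"

text \<open>Comparing two values of \<open>Gamma\<close> with the same start: a lower bound \<open>J\<close> at \<open>Q\<close> from one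
  admissible path, and an upper bound \<open>J + B\<close> for all admissible paths to \<open>Q'\<close>.  (The
  bound \<open>U\<close> only ensures that the supremum at \<open>Q\<close> is taken over a bounded set.)\<close>
lemma Gamma_increment:
  assumes x0: "admissible_path P Q x0" and x1: "admissible_path P Q' x1"
    and val: "path_value c q x0 = J"
    and up': "\<And>x. admissible_path P Q' x \<Longrightarrow> path_value c q x \<le> J + B"
    and up: "\<And>x. admissible_path P Q x \<Longrightarrow> path_value c q x \<le> U"
  shows "Gamma c q P Q' - Gamma c q P Q \<le> B"
proof -
  have Gamma_eq: "Gamma c q P R = Sup {path_value c q x | x. admissible_path P R x}" for R
    by (simp add: Gamma_def path_value_def)
  have "Gamma c q P Q' \<le> J + B"
    unfolding Gamma_eq by (rule cSup_least) (use x1 up' in auto)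
  moreover have "J \<le> Gamma c q P Q"
    unfolding Gamma_eq using x0 val up by (intro cSup_upper) (auto simp: bdd_above_def)
  ultimately show ?thesis by linarith
qed

lemma linepath_admissible:
  assumes "Q - P \<in> Wcone"
  shows "admissible_path P Q (linepath P Q)"
  unfolding admissible_path_def pw_C1_def
  using assms has_vector_derivative_linepath_within
  by (auto simp: linepath_0' linepath_1' intro!: exI[of _ "{0,1}"] exI[of _ "\<lambda>_. Q - P"])

lemma reciprocal_speed:
  assumes pw: "pwconst c S" and m: "0 < m" "\<And>x. m \<le> c x" and "\<sigma> \<noteq> 0"
  obtains S' where "pwconst (\<lambda>t. inverse (c (\<sigma> * t - q))) S'" "card S' \<le> card S"
    "\<And>t. 0 \<le> inverse (c (\<sigma> * t - q))" "\<And>t. inverse (c (\<sigma> * t - q)) \<le> inverse m"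
proof
  show "pwconst (\<lambda>t. inverse (c (\<sigma> * t - q))) ((\<lambda>s. (s - - q) / \<sigma>) ` S)"
    using pwconst_comp[OF pwconst_affine[OF pw \<open>\<sigma> \<noteq> 0\<close>, of "- q"], of inverse] by simp
  show "card ((\<lambda>s. (s - - q) / \<sigma>) ` S) \<le> card S"
    using pw card_image_le unfolding pwconst_def by blast
  fix t
  show "0 \<le> inverse (c (\<sigma> * t - q))" using m(1) m(2)[of "\<sigma> * t - q"] by simp
  show "inverse (c (\<sigma> * t - q)) \<le> inverse m"
    by (rule le_imp_inverse_le[OF m(2) m(1)])
qed

lemma Gamma_horizontal_increment:
  assumes pw: "pwconst c S" and m: "0 < m" "\<And>x. m \<le> c x"
    and \<delta>: "0 < \<delta>" "\<delta> \<le> 1" and "a \<le> z"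
  shows "Gamma c q (a, 0) (z, \<delta>) - Gamma c q (a, 0) (z, 0) \<le> (z - a + 4 * card S + 6) / m * sqrt \<delta>"
proof -
  define f where "f t = inverse (c (t - q))" for t
  obtain S' where pw': "pwconst f S'" and card: "card S' \<le> card S"
    and f0: "\<And>t. 0 \<le> f t" and fM: "\<And>t. f t \<le> inverse m"
    using reciprocal_speed[OF pw m, of 1 q] unfolding f_def by auto
  have value_eq: "path_value c q x = integral {0..1} (\<lambda>s. gam (vector_derivative x (at s)) * f (fst (x s)))" for x
    by (simp add: path_value_def f_def divide_inverse)
  define J where "J = integral {a..z} f"
  have bound: "path_value c q x \<le> J + (z - a + 4 * card S + 6) / m * sqrt d"
    if "admissible_path (a, 0) (z, t) x" "0 \<le> t" "t \<le> d" "0 < d" "d \<le> 1" for x t d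
  proof -
    have "inverse m * (z - a + 4 * card S' + 6) \<le> (z - a + 4 * card S + 6) / m"
      using card m \<open>a \<le> z\<close> by (simp add: divide_inverse_commute divide_right_mono)
    then show ?thesis
      using horizontal_path_bound[OF pw' f0 fM that(1) \<open>a \<le> z\<close> that(2-5)] that
      unfolding value_eq J_def by (smt (verit) mult_right_mono real_sqrt_ge_zero)
  qed
  have fst_segment: "fst (linepath (a, 0) (z, 0) s) = a + s * (z - a)" for s
    by (simp add: linepath_def algebra_simps)
  have "path_value c q (linepath (a, 0) (z, 0)) = integral {0..1} (\<lambda>s. (z - a) * f (a + s * (z - a)))"
    using \<open>a \<le> z\<close> by (simp add: value_eq gam_def fst_segment)
  also have "\<dots> = J"
    unfolding J_def by (rule integral_affine_reparam[OF pw' _ \<open>a \<le> z\<close>]) (use f0 fM in \<open>auto simp: abs_le_iff intro: order_trans[OF _ fM]\<close>)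
  finally have segment: "path_value c q (linepath (a, 0) (z, 0)) = J" .
  show ?thesis
    using \<delta> \<open>a \<le> z\<close> bound[where t=\<delta> and d=\<delta>] bound[where t=0 and d=1]
    by (intro Gamma_increment[OF linepath_admissible linepath_admissible segment])
       (auto simp: Wcone_def)
qed

lemma Gamma_diagonal_increment:
  assumes pw: "pwconst c S" and m: "0 < m" "\<And>x. m \<le> c x"
    and \<delta>: "0 < \<delta>" "\<delta> \<le> 1" and "b \<le> w"
  shows "Gamma c q (-b, b) (-w, w + \<delta>) - Gamma c q (-b, b) (-w, w) \<le> (w - b + 4 * card S + 6) / m * sqrt \<delta>"
proof -
  define f where "f t = inverse (c (- t - q))" for t
  obtain S' where pw': "pwconst f S'" and card: "card S' \<le> card S"
    and f0: "\<And>t. 0 \<le> f t" and fM: "\<And>t. f t \<le> inverse m"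
    using reciprocal_speed[OF pw m, of "-1" q] unfolding f_def by auto
  have value_eq: "path_value c q x = integral {0..1} (\<lambda>s. gam (vector_derivative x (at s)) * f (- fst (x s)))" for x
    by (simp add: path_value_def f_def divide_inverse)
  define J where "J = integral {b..w} f"
  have bound: "path_value c q x \<le> J + (w - b + 4 * card S + 6) / m * sqrt d"
    if "admissible_path (-b, b) (-w, w + t) x" "0 \<le> t" "t \<le> d" "0 < d" "d \<le> 1" for x t d
  proof -
    have "inverse m * (w - b + 4 * card S' + 6) \<le> (w - b + 4 * card S + 6) / m"
      using card m \<open>b \<le> w\<close> by (simp add: divide_inverse_commute divide_right_mono)
    then show ?thesis
      using diagonal_path_bound[OF pw' f0 fM that(1) \<open>b \<le> w\<close> that(2-5)] that
      unfolding value_eq J_def by (smt (verit) mult_right_mono real_sqrt_ge_zero)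
  qed
  have fst_segment: "fst (linepath (-b, b) (-w, w) s) = - b - s * (w - b)" for s
    by (simp add: linepath_def algebra_simps)
  have "path_value c q (linepath (-b, b) (-w, w)) = integral {0..1} (\<lambda>s. (w - b) * f (b + s * (w - b)))"
    using \<open>b \<le> w\<close> by (simp add: value_eq gam_def fst_segment add.commute)
  also have "\<dots> = J"
    unfolding J_def by (rule integral_affine_reparam[OF pw' _ \<open>b \<le> w\<close>]) (use f0 fM in \<open>auto simp: abs_le_iff intro: order_trans[OF _ fM]\<close>)
  finally have segment: "path_value c q (linepath (-b, b) (-w, w)) = J" .
  show ?thesis
    using \<delta> \<open>b \<le> w\<close> bound[where t=\<delta> and d=\<delta>] bound[where t=0 and d=1]
    by (intro Gamma_increment[OF linepath_admissible linepath_admissible segment])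
       (auto simp: Wcone_def)
qed

theorem mainTheorem9:
  fixes c :: "real \<Rightarrow> real" and q z w :: real
  assumes "step_speed c" and "z > 0" and "w > 0"
  shows "\<exists>C::real.
     (\<forall>\<delta> a. 0 < \<delta> \<and> \<delta> \<le> 1 \<and> 0 \<le> a \<and> a \<le> z \<longrightarrow>
        Gamma c q (a, 0) (z, \<delta>) - Gamma c q (a, 0) (z, 0) \<le> C * sqrt \<delta>) \<and>
     (\<forall>\<delta> b. 0 < \<delta> \<and> \<delta> \<le> 1 \<and> 0 \<le> b \<and> b \<le> w \<longrightarrow>
        Gamma c q (-b, b) (-w, w + \<delta>) - Gamma c q (-b, b) (-w, w) \<le> C * sqrt \<delta>)"
proof -
  obtain S where pw: "pwconst c S" using step_speed_pwconst[OF assms(1)] by blast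
  obtain m where m: "0 < m" "\<And>x. m \<le> c x" using step_speed_lower_bound[OF assms(1)] by blast
  define C where "C = (z + w + 4 * card S + 6) / m"
  have C: "(L + 4 * card S + 6) / m * sqrt \<delta> \<le> C * sqrt \<delta>" if "L \<le> z + w" "0 \<le> \<delta>" for L \<delta>
    unfolding C_def using that m by (intro mult_right_mono divide_right_mono) auto
  show ?thesis
  proof (intro exI[of _ C] conjI allI impI)
    fix \<delta> a :: real assume "0 < \<delta> \<and> \<delta> \<le> 1 \<and> 0 \<le> a \<and> a \<le> z"
    then show "Gamma c q (a, 0) (z, \<delta>) - Gamma c q (a, 0) (z, 0) \<le> C * sqrt \<delta>"
      using Gamma_horizontal_increment[OF pw m, of \<delta> a z q] C[of "z - a" \<delta>] assms by auto
  next
    fix \<delta> b :: real assume "0 < \<delta> \<and> \<delta> \<le> 1 \<and> 0 \<le> b \<and> b \<le> w"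
    then show "Gamma c q (-b, b) (-w, w + \<delta>) - Gamma c q (-b, b) (-w, w) \<le> C * sqrt \<delta>"
      using Gamma_diagonal_increment[OF pw m, of \<delta> b w q] C[of "w - b" \<delta>] assms by auto
  qed
qed

end
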